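(* Let $F$ be a smooth regular distribution supported on $[0,1]$. Then $\tilde{O}(\epsilon^{-1/2})$ oracle queries to $F$ and $f$ suffice to learn $F$ within Lévy distance $O(\epsilon)$.
   Context: A distribution is smooth if it has no point masses and its PDF $f$ is $C^1$; it is regular iff $f'(v)(1-F(v))\ge-2f(v)^2$ for all $v$ (equivalently $qF^{-1}(1-q)$ concave). Oracle query model: an algorithm adaptively chooses points $x$ and receives the exact values $F(x)$ and/or $f(x)$; afterwards it outputs a distribution $\hat F$, which must satisfy the accuracy guarantee in Lévy distance $\mathrm{L\acute{e}vy}(F,G)=\inf\{\epsilon: F(v-\epsilon)-\epsilon\le G(v)\le F(v+\epsilon)+\epsilon\ \forall v\}$. $\tilde{O}$ hides polylog$(1/\epsilon)$ factors. *)

theory Defs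
  imports "HOL-Analysis.Analysis"
begin

definition smooth_regular_01 :: "(real \<Rightarrow> real) \<Rightarrow> (real \<Rightarrow> real) \<Rightarrow> bool" where
  "smooth_regular_01 F f \<longleftrightarrow>
     (\<forall>x\<le>0. F x = 0) \<and> (\<forall>x\<ge>1. F x = 1) \<and>
     (\<forall>x. 0 \<le> f x) \<and> (\<forall>x. x \<notin> {0..1} \<longrightarrow> f x = 0) \<and>
     (\<forall>x\<in>{0..1}. (F has_real_derivative f x) (at x within {0..1})) \<and>
     (\<exists>f'. continuous_on {0..1} f' \<and>
        (\<forall>x\<in>{0..1}. (f has_real_derivative f' x) (at x within {0..1})) \<and>
        (\<forall>v\<in>{0..1}. f' v * (1 - F v) \<ge> - 2 * (f v)^2))"

definition is_cdf :: "(real \<Rightarrow> real) \<Rightarrow> bool" where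
  "is_cdf G \<longleftrightarrow> mono G \<and> (\<forall>x. continuous (at_right x) G) \<and>
     (G \<longlongrightarrow> 0) at_bot \<and> (G \<longlongrightarrow> 1) at_top"

definition levy :: "(real \<Rightarrow> real) \<Rightarrow> (real \<Rightarrow> real) \<Rightarrow> real" where
  "levy F G = Inf {e. 0 \<le> e \<and> (\<forall>v. F (v - e) - e \<le> G v \<and> G v \<le> F (v + e) + e)}"

text \<open>Adaptive deterministic oracle algorithms: given the history of queries
  (point x, answer (F x, f x)), either query a new point or output a distribution.\<close>
datatype action = Query real | Output "real \<Rightarrow> real"

type_synonym history = "(real \<times> (real \<times> real)) list"

fun run :: "(history \<Rightarrow> action) \<Rightarrow> (real \<Rightarrow> real \<times> real) \<Rightarrow> nat \<Rightarrow> history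
             \<Rightarrow> (real \<Rightarrow> real) option" where
  "run A orc 0 h = (case A h of Output G \<Rightarrow> Some G | Query x \<Rightarrow> None)"
| "run A orc (Suc n) h = (case A h of Output G \<Rightarrow> Some G
                        | Query x \<Rightarrow> run A orc n (h @ [(x, orc x)]))"

end

(*
  Regularity of F says exactly that g = 1 / (1 - F) is convex on the support: its derivative
  s = f / (1 - F)^2 is nondecreasing.  The learner queries F on the grid i / m with
  m ~ eps^(-1/2), and locates by bisection, to precision eps, the points where g crosses the
  levels 2^j (1 + i / m) and where s crosses the slopes 2^j i / m and 2^j m / i, for
  2^j < 1 / eps.  It outputs the CDF that interpolates the samples linearly in g.

  Let p < q be consecutive queried points with q - p > eps and F p < 1 - eps, and choose j
  with 2^j <= g p < 2^(j+1).  No threshold is crossed between p and q, so g q - g p <= 2^j / m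
  and q - p <= 1 / m.  If s p < 2^j, then s varies by at most 2^j / m, the chord exceeds g by
  at most 2^j / m^2, and the interpolant is off by at most 1 / m^2 <= eps vertically.
  Otherwise 1 / s varies by at most 1 / (2^j m), and convexity keeps the chord within
  horizontal distance 1 / m^2 <= eps of g.  Shorter segments, or segments where F is already
  above 1 - eps, are handled by monotonicity.  The learner makes O(m log(1/eps)^2) queries.
*)
theory Submission
  imports Defs
begin

section \<open>Tangents and chords\<close>

lemma le_of_nonneg_derivative_within:
  fixes h h' :: "real \<Rightarrow> real"
  assumes ab: "a \<le> b"
    and d: "\<And>x. x \<in> {a..b} \<Longrightarrow> (h has_real_derivative h' x) (at x within {a..b})"
    and nn: "\<And>x. x \<in> {a..b} \<Longrightarrow> 0 \<le> h' x"
  shows "h a \<le> h b"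
proof (rule DERIV_nonneg_imp_increasing_open[OF ab])
  fix x assume x: "a < x" "x < b"
  have "(h has_real_derivative h' x) (at x)"
    using d[of x] x at_within_Icc_at[of a x b] by auto
  then show "\<exists>y. DERIV h x :> y \<and> y \<ge> 0" using nn[of x] x by auto
next
  show "continuous_on {a..b} h"
    unfolding continuous_on_eq_continuous_within using d DERIV_continuous by blast
qed

lemma above_tangent_of_mono_derivative:
  fixes g g' :: "real \<Rightarrow> real"
  assumes d: "\<And>x. x \<in> {p..q} \<Longrightarrow> (g has_real_derivative g' x) (at x within {p..q})"
    and mono: "\<And>x y. x \<in> {p..q} \<Longrightarrow> y \<in> {p..q} \<Longrightarrow> x \<le> y \<Longrightarrow> g' x \<le> g' y"
    and a: "a \<in> {p..q}" and x: "x \<in> {p..q}"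
  shows "g a + g' a * (x - a) \<le> g x"
proof -
  have deriv: "(g has_real_derivative g' y) (at y within {u..w})"
    if "{u..w} \<subseteq> {p..q}" "y \<in> {u..w}" for u w y
    using has_field_derivative_subset[OF d] that by auto
  show ?thesis
  proof (cases "a \<le> x")
    case True
    have "(\<lambda>y. g y - g' a * y) a \<le> (\<lambda>y. g y - g' a * y) x"
    proof (rule le_of_nonneg_derivative_within[OF True])
      fix y assume y: "y \<in> {a..x}"
      show "((\<lambda>y. g y - g' a * y) has_real_derivative g' y - g' a) (at y within {a..x})"
        using deriv[of a x y] a x y by (auto intro!: derivative_eq_intros)
      show "0 \<le> g' y - g' a" using mono[of a y] y a x by auto
    qed
    then show ?thesis by (simp add: algebra_simps)
  next
    case False
    then have xa: "x \<le> a" by simp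
    have "(\<lambda>y. g' a * y - g y) x \<le> (\<lambda>y. g' a * y - g y) a"
    proof (rule le_of_nonneg_derivative_within[OF xa])
      fix y assume y: "y \<in> {x..a}"
      show "((\<lambda>y. g' a * y - g y) has_real_derivative g' a - g' y) (at y within {x..a})"
        using deriv[of x a y] a x y by (auto intro!: derivative_eq_intros)
      show "0 \<le> g' a - g' y" using mono[of y a] y a x by auto
    qed
    then show ?thesis by (simp add: algebra_simps)
  qed
qed

lemma le_chord_of_tangents:
  fixes g s :: "real \<Rightarrow> real"
  assumes pq: "p < q" and v: "p \<le> v" "v \<le> q"
    and tp: "g v + s v * (p - v) \<le> g p" and tq: "g v + s v * (q - v) \<le> g q"
  shows "g v \<le> ((q - v) * g p + (v - p) * g q) / (q - p)"
proof -
  have "(q - v) * (g v + s v * (p - v)) \<le> (q - v) * g p"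
    using tp v by (intro mult_left_mono) auto
  moreover have "(v - p) * (g v + s v * (q - v)) \<le> (v - p) * g q"
    using tq v by (intro mult_left_mono) auto
  ultimately have "(q - p) * g v \<le> (q - v) * g p + (v - p) * g q"
    by (simp add: algebra_simps)
  then show ?thesis using pq by (simp add: field_simps)
qed

lemma chord_sub_le_of_tangents:
  fixes g s :: "real \<Rightarrow> real"
  assumes pq: "p < q" and v: "p \<le> v" "v \<le> q"
    and tp: "g p + s p * (v - p) \<le> g v" and tq: "g q + s q * (p - q) \<le> g p"
    and sm: "s p \<le> s q"
  shows "((q - v) * g p + (v - p) * g q) / (q - p) - g v \<le> (q - p) * (s q - s p)"
proof -
  have chord: "((q - v) * g p + (v - p) * g q) / (q - p) = g p + (v - p) * ((g q - g p) / (q - p))"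
    using pq by (simp add: field_simps)
  have "(g q - g p) / (q - p) \<le> s q" using tq pq by (simp add: field_simps)
  then have "(v - p) * ((g q - g p) / (q - p)) \<le> (v - p) * s q"
    using v by (intro mult_left_mono) auto
  then have "((q - v) * g p + (v - p) * g q) / (q - p) - g v \<le> (v - p) * (s q - s p)"
    using chord tp by (simp add: algebra_simps)
  also have "\<dots> \<le> (q - p) * (s q - s p)"
    using v sm by (intro mult_right_mono) auto
  finally show ?thesis .
qed

text \<open>The horizontal counterpart of the previous lemma: the chord lies below \<open>g\<close> shifted
  left by \<open>e\<close>.\<close>
lemma chord_le_shifted_of_tangents:
  fixes g s :: "real \<Rightarrow> real"
  assumes pq: "p < q" and v: "p \<le> v" "v \<le> q" and e: "0 \<le> e" "v + e \<le> q"
    and t1: "g p + s p * (v + e - p) \<le> g (v + e)"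
    and t2: "g q + s q * (v + e - q) \<le> g (v + e)"
    and t3: "g p + s p * (q - p) \<le> g q"
    and t4: "g q + s q * (p - q) \<le> g p"
    and sp: "0 < s p"
    and close: "(g q - g p) * (1 / s p - 1 / s q) \<le> e"
  shows "((q - v) * g p + (v - p) * g q) / (q - p) \<le> g (v + e)"
proof (rule ccontr)
  define w where "w = q - p"
  define t where "t = v - p"
  define m where "m = (g q - g p) / w"
  have w: "0 < w" using pq w_def by simp
  have gq: "g q = g p + m * w" using w unfolding m_def by simp
  assume "\<not> ((q - v) * g p + (v - p) * g q) / (q - p) \<le> g (v + e)"
  then have below: "g (v + e) < g p + m * t"
    using w unfolding m_def t_def w_def by (simp add: field_simps)
  have spm: "s p \<le> m" using t3 w unfolding m_def w_def by (simp add: field_simps)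
  have msq: "m \<le> s q" using t4 w unfolding m_def w_def by (simp add: field_simps)
  have sq: "0 < s q" using sp spm msq by linarith
  have t0: "0 \<le> t" "t \<le> w" using v unfolding t_def w_def by auto
  have "s p * e < t * (m - s p)"
    using below t1 unfolding t_def by (simp add: algebra_simps)
  then have c1: "e < t * (m / s p - 1)" using sp by (simp add: field_simps)
  have "s q * e < (w - t) * (s q - m)"
    using below t2 gq unfolding t_def w_def by (simp add: algebra_simps)
  then have c2: "e < (w - t) * (1 - m / s q)" using sq by (simp add: field_simps)
  have "t * (m / s p - 1) \<le> w * (m / s p - 1)"
    using t0 spm sp by (intro mult_right_mono) (auto simp: field_simps)
  moreover have "(w - t) * (1 - m / s q) \<le> w * (1 - m / s q)"
    using t0 msq sq by (intro mult_right_mono) (auto simp: field_simps)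
  moreover have "w * (m / s p - 1) + w * (1 - m / s q) = (g q - g p) * (1 / s p - 1 / s q)"
    using w sp sq unfolding m_def by (simp add: field_simps)
  ultimately show False using c1 c2 close e by linarith
qed

section \<open>Smooth regular distributions\<close>

lemma smooth_regular_01_deriv_within:
  assumes "smooth_regular_01 F f" "{a..b} \<subseteq> {0..1}" "x \<in> {a..b}"
  shows "(F has_real_derivative f x) (at x within {a..b})"
  using assms unfolding smooth_regular_01_def by (meson has_field_derivative_subset subsetD)

lemma smooth_regular_01_pdf_nonneg: "smooth_regular_01 F f \<Longrightarrow> 0 \<le> f x"
  unfolding smooth_regular_01_def by auto

lemma smooth_regular_01_mono_on_support:
  assumes sr: "smooth_regular_01 F f" and "0 \<le> a" "a \<le> b" "b \<le> 1"
  shows "F a \<le> F b"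
  by (rule le_of_nonneg_derivative_within[where h'=f, OF \<open>a \<le> b\<close>])
    (use assms smooth_regular_01_deriv_within smooth_regular_01_pdf_nonneg in auto)

lemma smooth_regular_01_cdf:
  assumes sr: "smooth_regular_01 F f"
  shows "mono F" "0 \<le> F x" "F x \<le> 1" "F 0 = 0" "F 1 = 1"
proof -
  have zero: "\<And>x. x \<le> 0 \<Longrightarrow> F x = 0" and one: "\<And>x. 1 \<le> x \<Longrightarrow> F x = 1"
    using sr unfolding smooth_regular_01_def by auto
  then show "F 0 = 0" "F 1 = 1" by auto
  have range: "0 \<le> F x \<and> F x \<le> 1" for x
    using zero[of x] one[of x] \<open>F 0 = 0\<close> \<open>F 1 = 1\<close>
      smooth_regular_01_mono_on_support[OF sr, of 0 x] smooth_regular_01_mono_on_support[OF sr, of x 1]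
    by (cases "x \<le> 0 \<or> 1 \<le> x") auto
  then show "0 \<le> F x" "F x \<le> 1" by auto
  show "mono F"
  proof
    fix x y :: real assume "x \<le> y"
    then show "F x \<le> F y"
      using zero[of x] one[of y] range[of x] range[of y] smooth_regular_01_mono_on_support[OF sr, of x y]
      by (cases "x \<le> 0 \<or> 1 \<le> y") auto
  qed
qed

definition inv_surv :: "(real \<Rightarrow> real) \<Rightarrow> real \<Rightarrow> real" where
  "inv_surv F x = 1 / (1 - F x)"

definition inv_surv_slope :: "(real \<Rightarrow> real) \<Rightarrow> (real \<Rightarrow> real) \<Rightarrow> real \<Rightarrow> real" where
  "inv_surv_slope F f x = f x / (1 - F x)^2"

lemma inv_surv_has_derivative:
  assumes sr: "smooth_regular_01 F f" and "{a..b} \<subseteq> {0..1}" "x \<in> {a..b}" and Fx: "F x < 1"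
  shows "(inv_surv F has_real_derivative inv_surv_slope F f x) (at x within {a..b})"
proof -
  have "F x \<noteq> 1" using Fx by simp
  with smooth_regular_01_deriv_within[OF assms(1-3)] show ?thesis
    unfolding inv_surv_def[abs_def] inv_surv_slope_def
    by (auto intro!: derivative_eq_intros simp: power2_eq_square)
qed

lemma inv_surv_slope_mono:
  assumes sr: "smooth_regular_01 F f" and vw: "0 \<le> v" "v \<le> w" "w \<le> 1" and Fw: "F w < 1"
  shows "inv_surv_slope F f v \<le> inv_surv_slope F f w"
proof -
  obtain f' where df: "\<forall>x\<in>{0..1}. (f has_real_derivative f' x) (at x within {0..1})"
     and reg: "\<forall>x\<in>{0..1}. - 2 * (f x)^2 \<le> f' x * (1 - F x)"
    using sr unfolding smooth_regular_01_def by blast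
  show ?thesis unfolding inv_surv_slope_def
  proof (rule le_of_nonneg_derivative_within[OF vw(2)])
    fix x assume x: "x \<in> {v..w}"
    have x01: "x \<in> {0..1}" using x vw by auto
    have Fx: "F x < 1"
      using smooth_regular_01_cdf(1)[OF sr] x Fw by (meson atLeastAtMost_iff le_less_trans monoD)
    have "(f has_real_derivative f' x) (at x within {v..w})"
      using has_field_derivative_subset[of f "f' x" x "{0..1}" "{v..w}"] df x01 vw by auto
    moreover have "(F has_real_derivative f x) (at x within {v..w})"
      using smooth_regular_01_deriv_within[OF sr _ x] vw by auto
    moreover have "(a * u^2 - b * (of_nat 2 * ((0 - b) * u ^ (2 - Suc 0)))) / (u^2 * u^2)
        = (a * u + 2 * b^2) / u^3" if "u \<noteq> 0" for a b u :: real
      using that by (simp add: field_simps power2_eq_square power3_eq_cube)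
    ultimately show "((\<lambda>x. f x / (1 - F x)^2) has_real_derivative
        (f' x * (1 - F x) + 2 * (f x)^2) / (1 - F x)^3) (at x within {v..w})"
      using Fx
      by (auto intro!: DERIV_cong[OF DERIV_divide[OF _ DERIV_power[OF DERIV_diff[OF DERIV_const]]]])
    show "0 \<le> (f' x * (1 - F x) + 2 * (f x)^2) / (1 - F x)^3"
      using reg[rule_format, OF x01] Fx by (intro divide_nonneg_pos) auto
  qed
qed

section \<open>Interpolation linear in \<open>1 / (1 - F)\<close>\<close>

text \<open>The value at \<open>v\<close> of the interpolation between \<open>a\<close> at \<open>p\<close> and \<open>b\<close> at \<open>q\<close> that is
  linear in the coordinate \<open>1 / (1 - F)\<close>; that coordinate is infinite when \<open>b = 1\<close>, and then
  plain linear interpolation is used.\<close>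
definition inv_surv_interp :: "real \<Rightarrow> real \<Rightarrow> real \<Rightarrow> real \<Rightarrow> real \<Rightarrow> real" where
  "inv_surv_interp a b p q v = (let t = (v - p) / (q - p) in
     if b < 1 then 1 - 1 / ((1 - t) / (1 - a) + t / (1 - b)) else a + t * (b - a))"

lemma inv_surv_interp_bounds:
  assumes ab: "0 \<le> a" "a \<le> b" "b \<le> 1" and pq: "p < q" and v: "p \<le> v" "v \<le> w" "w \<le> q"
  shows "inv_surv_interp a b p q v \<le> inv_surv_interp a b p q w"
    and "a \<le> inv_surv_interp a b p q v" "inv_surv_interp a b p q v \<le> b"
proof -
  define t where "t = (\<lambda>v. (v - p) / (q - p))"
  have "t v \<le> t w" using v pq unfolding t_def by (intro divide_right_mono) auto
  moreover have "0 \<le> t v" "t w \<le> 1" using v pq unfolding t_def by (auto simp: field_simps)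
  ultimately have t: "0 \<le> t v" "t v \<le> t w" "t w \<le> 1" by auto
  have interp_t: "inv_surv_interp a b p q x = (if b < 1 then 1 - 1 / ((1 - t x) / (1 - a) + t x / (1 - b))
      else a + t x * (b - a))" for x
    unfolding inv_surv_interp_def t_def Let_def by simp
  have "inv_surv_interp a b p q v \<le> inv_surv_interp a b p q w \<and>
      a \<le> inv_surv_interp a b p q v \<and> inv_surv_interp a b p q v \<le> b"
  proof (cases "b < 1")
    case True
    define A where "A = 1 / (1 - a)"
    define B where "B = 1 / (1 - b)"
    have AB: "1 \<le> A" "A \<le> B" using ab True unfolding A_def B_def by (auto simp: field_simps)
    have lin: "(1 - t x) / (1 - a) + t x / (1 - b) = A + t x * (B - A)" for x
      unfolding A_def B_def by (simp add: algebra_simps add_divide_distrib[symmetric])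
    have "A + t v * (B - A) \<le> A + t w * (B - A)" "A + t v * (B - A) \<le> B"
      using t AB mult_right_mono[of "t v" 1 "B - A"] by (auto intro: add_left_mono mult_right_mono)
    moreover have "a = 1 - 1 / A" "b = 1 - 1 / B" using ab True unfolding A_def B_def by auto
    moreover have "A \<le> A + t v * (B - A)" using t AB by simp
    ultimately show ?thesis using True AB unfolding interp_t lin by (simp add: frac_le)
  next
    case False
    have "t v * (b - a) \<le> t w * (b - a)" "t v * (b - a) \<le> 1 * (b - a)"
      using t ab by (intro mult_right_mono; linarith)+
    then show ?thesis using False t ab unfolding interp_t by simp
  qed
  then show "inv_surv_interp a b p q v \<le> inv_surv_interp a b p q w"
    "a \<le> inv_surv_interp a b p q v" "inv_surv_interp a b p q v \<le> b" by auto
qed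

lemma isCont_inv_surv_interp:
  assumes ab: "0 \<le> a" "a \<le> b" "b \<le> 1" and pq: "p < q" and v: "p \<le> v" "v \<le> q"
  shows "isCont (inv_surv_interp a b p q) v"
proof (cases "b < 1")
  case True
  define t where "t = (v - p) / (q - p)"
  have t: "0 \<le> t" "t \<le> 1" using v pq unfolding t_def by (auto simp: field_simps)
  have "0 < (1 - t) / (1 - a) \<or> 0 < t / (1 - b)"
    using True ab t v pq unfolding t_def by (cases "v = p") auto
  moreover have "0 \<le> (1 - t) / (1 - a)" "0 \<le> t / (1 - b)" using True ab t by auto
  ultimately have pos: "0 < (1 - t) / (1 - a) + t / (1 - b)" by linarith
  have eq: "inv_surv_interp a b p q =
      (\<lambda>x. 1 - 1 / ((1 - (x - p) / (q - p)) / (1 - a) + (x - p) / (q - p) / (1 - b)))"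
    using True unfolding inv_surv_interp_def Let_def by auto
  show ?thesis unfolding eq using pos pq True ab unfolding t_def by (intro continuous_intros) auto
next
  case False
  have eq: "inv_surv_interp a b p q = (\<lambda>x. a + (x - p) / (q - p) * (b - a))"
    using False unfolding inv_surv_interp_def Let_def by auto
  show ?thesis unfolding eq using pq by (intro continuous_intros) auto
qed

locale regular_segment =
  fixes F f :: "real \<Rightarrow> real" and p q :: real
  assumes regular: "smooth_regular_01 F f"
    and segment: "0 \<le> p" "p < q" "q \<le> 1"
    and below_one: "F q < 1"
begin

abbreviation "g \<equiv> inv_surv F"
abbreviation "s \<equiv> inv_surv_slope F f"

definition chord :: "real \<Rightarrow> real" where
  "chord v = ((q - v) * g p + (v - p) * g q) / (q - p)"

lemma F_less_one: "x \<le> q \<Longrightarrow> F x < 1"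
  using smooth_regular_01_cdf(1)[OF regular] below_one by (meson le_less_trans monoD)

lemma F_eq_inv_surv: "x \<le> q \<Longrightarrow> F x = 1 - 1 / g x"
  using F_less_one[of x] unfolding inv_surv_def by simp

lemma inv_surv_ge_one: "x \<le> q \<Longrightarrow> 1 \<le> g x"
  using F_less_one[of x] smooth_regular_01_cdf(2)[OF regular, of x] unfolding inv_surv_def by simp

lemma inv_surv_mono: "x \<le> y \<Longrightarrow> y \<le> q \<Longrightarrow> g x \<le> g y"
  using smooth_regular_01_cdf(1)[OF regular] F_less_one[of y] unfolding inv_surv_def
  by (simp add: frac_le monoD)

lemma slope_mono: "x \<in> {p..q} \<Longrightarrow> y \<in> {p..q} \<Longrightarrow> x \<le> y \<Longrightarrow> s x \<le> s y"
  using inv_surv_slope_mono[OF regular] segment F_less_one by auto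

lemma tangent_below: "a \<in> {p..q} \<Longrightarrow> x \<in> {p..q} \<Longrightarrow> g a + s a * (x - a) \<le> g x"
  by (rule above_tangent_of_mono_derivative[OF _ slope_mono])
    (use inv_surv_has_derivative[OF regular] segment F_less_one in auto)

lemma interp_eq_chord: "inv_surv_interp (F p) (F q) p q v = 1 - 1 / chord v"
proof -
  have "1 - (v - p) / (q - p) = (q - v) / (q - p)" using segment by (simp add: field_simps)
  then have "(1 - (v - p) / (q - p)) / (1 - F p) + (v - p) / (q - p) / (1 - F q) = chord v"
    unfolding chord_def inv_surv_def by (simp add: add_divide_distrib mult.commute)
  then show ?thesis using below_one unfolding inv_surv_interp_def Let_def by simp
qed

lemma le_chord: "v \<in> {p..q} \<Longrightarrow> g v \<le> chord v"
  unfolding chord_def using segment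
  by (intro le_chord_of_tangents[where s = s] tangent_below) auto

lemma le_interp:
  assumes "v \<in> {p..q}"
  shows "F v \<le> inv_surv_interp (F p) (F q) p q v"
  using le_chord[OF assms] inv_surv_ge_one[of v] assms F_eq_inv_surv[of v]
  unfolding interp_eq_chord by (simp add: frac_le)

lemma interp_le_add:
  assumes v: "v \<in> {p..q}" and B: "0 < B" "B \<le> g p" and D: "(q - p) * (s q - s p) \<le> D"
  shows "inv_surv_interp (F p) (F q) p q v \<le> F v + D / B^2"
proof -
  have flat: "chord v - g v \<le> (q - p) * (s q - s p)"
    unfolding chord_def using segment v
    by (intro chord_sub_le_of_tangents[where s = s] tangent_below slope_mono) auto
  have gv: "B \<le> g v" using B inv_surv_mono[of p v] v by auto
  have "1 / g v - 1 / chord v = (chord v - g v) / (g v * chord v)"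
    using inv_surv_ge_one[of v] le_chord[OF v] v by (simp add: field_simps)
  also have "\<dots> \<le> D / (B * B)"
    using flat D B gv le_chord[OF v] by (intro frac_le mult_mono) auto
  finally show ?thesis using v F_eq_inv_surv[of v] unfolding interp_eq_chord by (simp add: power2_eq_square)
qed

lemma interp_le_shift:
  assumes v: "v \<in> {p..q}" and e: "0 \<le> e" and sp: "0 < s p"
    and close: "(g q - g p) * (1 / s p - 1 / s q) \<le> e"
  shows "inv_surv_interp (F p) (F q) p q v \<le> F (v + e)"
proof (cases "v + e \<le> q")
  case True
  have "chord v \<le> g (v + e)"
    unfolding chord_def using segment v e True sp close
    by (intro chord_le_shifted_of_tangents[where s = s] tangent_below) auto
  then show ?thesis
    using le_chord[OF v] inv_surv_ge_one[of v] v F_eq_inv_surv[OF True]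
    unfolding interp_eq_chord by (simp add: frac_le)
next
  case False
  have "(q - v) * g p + (v - p) * g q \<le> (q - v) * g q + (v - p) * g q"
    using v inv_surv_mono[of p q] segment by (intro add_right_mono mult_left_mono) auto
  then have "chord v \<le> g q" unfolding chord_def using segment by (simp add: field_simps)
  then have "inv_surv_interp (F p) (F q) p q v \<le> F q"
    using le_chord[OF v] inv_surv_ge_one[of v] v F_eq_inv_surv[of q]
    unfolding interp_eq_chord by (simp add: frac_le)
  also have "F q \<le> F (v + e)"
    using False smooth_regular_01_cdf(1)[OF regular] by (simp add: monoD)
  finally show ?thesis .
qed

end

section \<open>Piecewise interpolation of sampled values\<close>

definition left_pt :: "real set \<Rightarrow> real \<Rightarrow> real" where
  "left_pt X v = Max {x\<in>X. x \<le> v}"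

definition right_pt :: "real set \<Rightarrow> real \<Rightarrow> real" where
  "right_pt X v = Min {x\<in>X. v < x}"

definition interp_cdf :: "real set \<Rightarrow> (real \<Rightarrow> real) \<Rightarrow> real \<Rightarrow> real" where
  "interp_cdf X V v = (if v < 0 then 0 else if 1 \<le> v then 1 else
      inv_surv_interp (V (left_pt X v)) (V (right_pt X v)) (left_pt X v) (right_pt X v) v)"

locale sample_points =
  fixes X :: "real set"
  assumes finite_X: "finite X" and zero_in: "0 \<in> X" and one_in: "1 \<in> X"
    and X_unit: "X \<subseteq> {0..1}"
begin

lemma left_pt:
  assumes "0 \<le> v"
  shows "left_pt X v \<in> X" "left_pt X v \<le> v" "\<And>x. x \<in> X \<Longrightarrow> x \<le> v \<Longrightarrow> x \<le> left_pt X v"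
proof -
  have "{x\<in>X. x \<le> v} \<noteq> {}" "finite {x\<in>X. x \<le> v}" using zero_in finite_X assms by auto
  then show "left_pt X v \<in> X" "left_pt X v \<le> v" "\<And>x. x \<in> X \<Longrightarrow> x \<le> v \<Longrightarrow> x \<le> left_pt X v"
    unfolding left_pt_def using Max_in Max_ge by auto
qed

lemma right_pt:
  assumes "v < 1"
  shows "right_pt X v \<in> X" "v < right_pt X v" "\<And>x. x \<in> X \<Longrightarrow> v < x \<Longrightarrow> right_pt X v \<le> x"
proof -
  have "{x\<in>X. v < x} \<noteq> {}" "finite {x\<in>X. v < x}" using one_in finite_X assms by auto
  then show "right_pt X v \<in> X" "v < right_pt X v" "\<And>x. x \<in> X \<Longrightarrow> v < x \<Longrightarrow> right_pt X v \<le> x"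
    unfolding right_pt_def using Min_in Min_le by auto
qed

lemma same_segment:
  assumes v: "0 \<le> v" "v \<le> w" "w < right_pt X v" "w < 1"
  shows "left_pt X w = left_pt X v" "right_pt X w = right_pt X v"
proof -
  note P = left_pt[OF v(1)] right_pt[of v] and Q = left_pt[of w] right_pt[OF v(4)]
  have "left_pt X w \<le> v"
    using P Q v by (meson le_less_trans not_le order.trans)
  then show "left_pt X w = left_pt X v"
    using P Q v by (meson order.antisym order.trans)
  show "right_pt X w = right_pt X v"
    using P Q v by (meson order.antisym le_less_trans order_less_imp_le)
qed

lemma segment_gap:
  assumes "0 \<le> v" "v < 1" "x \<in> X"
  shows "x \<le> left_pt X v \<or> right_pt X v \<le> x"
  using left_pt(3)[OF assms(1,3)] right_pt(3)[OF assms(2,3)] by fastforce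

end

locale sampled_cdf = sample_points X for X +
  fixes V F :: "real \<Rightarrow> real"
  assumes samples: "\<And>x. x \<in> X \<Longrightarrow> V x = F x"
    and mono_F: "mono F" and F_nonneg: "\<And>x. 0 \<le> F x" and F_le_one: "\<And>x. F x \<le> 1"
    and F_zero: "F 0 = 0" and F_one: "F 1 = 1"
begin

lemma interp_cdf_eq:
  assumes "0 \<le> v" "v < 1"
  shows "interp_cdf X V v =
    inv_surv_interp (F (left_pt X v)) (F (right_pt X v)) (left_pt X v) (right_pt X v) v"
  using assms left_pt[of v] right_pt[of v] samples unfolding interp_cdf_def by auto

lemma F_left_le_right: "0 \<le> v \<Longrightarrow> v < 1 \<Longrightarrow> F (left_pt X v) \<le> F (right_pt X v)"
  using left_pt[of v] right_pt[of v] mono_F by (meson less_imp_le monoD order.trans)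

lemma interp_cdf_between:
  assumes "0 \<le> v" "v < 1"
  shows "F (left_pt X v) \<le> interp_cdf X V v" "interp_cdf X V v \<le> F (right_pt X v)"
  using inv_surv_interp_bounds(2,3)[OF F_nonneg F_left_le_right[OF assms] F_le_one, of _ _ v v]
    left_pt[of v] right_pt[of v] assms
  unfolding interp_cdf_eq[OF assms] by auto

lemma interp_cdf_range: "0 \<le> interp_cdf X V v" "interp_cdf X V v \<le> 1"
  using interp_cdf_between[of v] F_nonneg[of "left_pt X v"] F_le_one[of "right_pt X v"]
  unfolding interp_cdf_def by (auto split: if_splits)

lemma mono_interp_cdf: "mono (interp_cdf X V)"
proof
  fix v w :: real assume vw: "v \<le> w"
  show "interp_cdf X V v \<le> interp_cdf X V w"
  proof (cases "v < 0 \<or> 1 \<le> w")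
    case True
    then show ?thesis using interp_cdf_range[of v] interp_cdf_range[of w] vw
      unfolding interp_cdf_def[of X V v] interp_cdf_def[of X V w] by auto
  next
    case False
    then have vw01: "0 \<le> v" "v < 1" "0 \<le> w" "w < 1" using vw by auto
    show ?thesis
    proof (cases "w < right_pt X v")
      case True
      show ?thesis
        using inv_surv_interp_bounds(1)[OF F_nonneg F_left_le_right[OF vw01(1,2)] F_le_one, of _ _ v w]
          left_pt[of v] right_pt[of v] vw True same_segment[OF vw01(1) vw True vw01(4)] vw01
        unfolding interp_cdf_eq[OF vw01(1,2)] interp_cdf_eq[OF vw01(3,4)] by auto
    next
      case False
      then have "F (right_pt X v) \<le> F (left_pt X w)"
        using left_pt(3)[OF vw01(3)] right_pt[OF vw01(2)] mono_F by (auto simp: monoD)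
      then show ?thesis using interp_cdf_between[of v] interp_cdf_between[of w] vw01 by linarith
    qed
  qed
qed

lemma interp_cdf_right_continuous: "continuous (at_right v) (interp_cdf X V)"
proof -
  consider "v < 0" | "1 \<le> v" | "0 \<le> v" "v < 1" by linarith
  then show ?thesis
  proof cases
    case 1
    have "\<forall>\<^sub>F x in at_right v. interp_cdf X V x = interp_cdf X V v"
      using 1 unfolding eventually_at_right_field
      by (intro exI[of _ 0]) (auto simp: interp_cdf_def)
    then show ?thesis unfolding continuous_within by (rule tendsto_eventually)
  next
    case 2
    have "\<forall>\<^sub>F x in at_right v. interp_cdf X V x = interp_cdf X V v"
      using 2 unfolding eventually_at_right_field
      by (intro exI[of _ "v + 1"]) (auto simp: interp_cdf_def)
    then show ?thesis unfolding continuous_within by (rule tendsto_eventually)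
  next
    case 3
    define h where "h = inv_surv_interp (F (left_pt X v)) (F (right_pt X v)) (left_pt X v) (right_pt X v)"
    have "\<forall>\<^sub>F x in at_right v. interp_cdf X V x = h x"
      unfolding eventually_at_right_field
    proof (intro exI[of _ "min (right_pt X v) 1"] conjI allI impI)
      show "v < min (right_pt X v) 1" using right_pt 3 by simp
      fix x assume "v < x" "x < min (right_pt X v) 1"
      then show "interp_cdf X V x = h x"
        using same_segment[of v x] 3 interp_cdf_eq[of x] unfolding h_def by auto
    qed
    moreover have "isCont h v" unfolding h_def
      using left_pt[of v] right_pt[of v] 3
      by (intro isCont_inv_surv_interp F_nonneg F_left_le_right F_le_one) auto
    then have "(h \<longlongrightarrow> h v) (at_right v)" by (simp add: isCont_def filterlim_at_split)
    ultimately show ?thesis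
      using interp_cdf_eq[OF 3] unfolding continuous_within h_def by (simp add: tendsto_cong)
  qed
qed

lemma is_cdf_interp_cdf: "is_cdf (interp_cdf X V)"
proof -
  have "\<forall>\<^sub>F x in at_bot. interp_cdf X V x = 0"
    unfolding eventually_at_bot_linorder by (intro exI[of _ "-1"]) (auto simp: interp_cdf_def)
  moreover have "\<forall>\<^sub>F x in at_top. interp_cdf X V x = 1"
    unfolding eventually_at_top_linorder by (intro exI[of _ 1]) (auto simp: interp_cdf_def)
  ultimately show ?thesis
    unfolding is_cdf_def using mono_interp_cdf interp_cdf_right_continuous
    by (simp add: tendsto_eventually)
qed

lemma levy_interp_cdf_le:
  assumes e: "0 \<le> e"
    and local: "\<And>v. 0 \<le> v \<Longrightarrow> v < 1 \<Longrightarrow>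
      F (v - e) - e \<le> interp_cdf X V v \<and> interp_cdf X V v \<le> F (v + e) + e"
  shows "levy F (interp_cdf X V) \<le> e"
proof -
  have F_below: "F x = 0" if "x \<le> 0" for x
    using mono_F F_nonneg[of x] F_zero that by (metis antisym monoD)
  have F_above: "F x = 1" if "1 \<le> x" for x
    using mono_F F_le_one[of x] F_one that by (metis antisym monoD)
  have "F (v - e) - e \<le> interp_cdf X V v \<and> interp_cdf X V v \<le> F (v + e) + e" for v
    using local[of v] e F_below[of "v - e"] F_above[of "v + e"]
      F_nonneg[of "v + e"] F_le_one[of "v - e"]
    unfolding interp_cdf_def[of X V v] by (cases "v < 0 \<or> 1 \<le> v") auto
  then show ?thesis unfolding levy_def
    using e by (intro cInf_lower bdd_belowI[of _ 0]) auto
qed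

end

section \<open>The learner\<close>

definition bisect_step ::
    "(real \<times> real \<Rightarrow> bool) \<Rightarrow> real \<times> real \<Rightarrow> real \<times> (real \<times> real) \<Rightarrow> real \<times> real" where
  "bisect_step P st e = (if P (snd e) then (fst st, fst e) else (fst e, snd st))"

definition bisect_state :: "(real \<times> real \<Rightarrow> bool) \<Rightarrow> history \<Rightarrow> real \<times> real" where
  "bisect_state P es = foldl (bisect_step P) (0, 1) es"

text \<open>The query schedule: first the grid points \<open>i / m\<close> for \<open>i \<le> m\<close>, then, for each
  test \<open>T ! j\<close> in turn, \<open>K\<close> bisection steps locating where the test switches on.\<close>
definition next_query :: "nat \<Rightarrow> nat \<Rightarrow> (real \<times> real \<Rightarrow> bool) list \<Rightarrow> history \<Rightarrow> real" where
  "next_query m K T h = (let n = length h in if n \<le> m then real n / real m else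
     (let j = (n - Suc m) div K; i = (n - Suc m) mod K;
          st = bisect_state (T ! j) (take i (drop (Suc m + j * K) h)) in (fst st + snd st) / 2))"

definition num_queries :: "nat \<Rightarrow> nat \<Rightarrow> (real \<times> real \<Rightarrow> bool) list \<Rightarrow> nat" where
  "num_queries m K T = Suc m + length T * K"

definition sampled_values :: "history \<Rightarrow> real \<Rightarrow> real" where
  "sampled_values h x = (case map_of (map (\<lambda>e. (fst e, fst (snd e))) h) x of Some a \<Rightarrow> a | None \<Rightarrow> 0)"

definition queried_pts :: "history \<Rightarrow> real set" where
  "queried_pts h = ({0, 1} \<union> fst ` set h) \<inter> {0..1}"

definition learner :: "nat \<Rightarrow> nat \<Rightarrow> (real \<times> real \<Rightarrow> bool) list \<Rightarrow> history \<Rightarrow> action" where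
  "learner m K T h = (if length h < num_queries m K T then Query (next_query m K T h)
     else Output (interp_cdf (queried_pts h) (sampled_values h)))"

fun query_trace :: "(real \<Rightarrow> real \<times> real) \<Rightarrow> (history \<Rightarrow> real) \<Rightarrow> nat \<Rightarrow> history" where
  "query_trace orc nxt 0 = []"
| "query_trace orc nxt (Suc n) =
    query_trace orc nxt n @ [(nxt (query_trace orc nxt n), orc (nxt (query_trace orc nxt n)))]"

lemma length_query_trace [simp]: "length (query_trace orc nxt n) = n"
  by (induction n) auto

lemma take_query_trace: "i \<le> n \<Longrightarrow> take i (query_trace orc nxt n) = query_trace orc nxt i"
  by (induction n) (auto simp: take_append le_Suc_eq)

lemma nth_query_trace:
  "i < n \<Longrightarrow> query_trace orc nxt n ! i = (nxt (query_trace orc nxt i), orc (nxt (query_trace orc nxt i)))"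
  by (induction n) (auto simp: nth_append less_Suc_eq)

lemma run_query_trace:
  assumes ask: "\<And>h. length h < Q \<Longrightarrow> A h = Query (nxt h)"
    and stop: "\<And>h. Q \<le> length h \<Longrightarrow> A h = Output (out h)"
  shows "k \<le> Q \<Longrightarrow> Q \<le> k + n \<Longrightarrow>
    run A orc n (query_trace orc nxt k) = Some (out (query_trace orc nxt Q))"
proof (induction n arbitrary: k)
  case 0
  then show ?case using stop[of "query_trace orc nxt k"] by simp
next
  case (Suc n)
  show ?case
  proof (cases "k = Q")
    case True
    then show ?thesis using stop[of "query_trace orc nxt k"] by simp
  next
    case False
    then have "run A orc (Suc n) (query_trace orc nxt k) = run A orc n (query_trace orc nxt (Suc k))"
      using ask[of "query_trace orc nxt k"] Suc.prems by simp
    also have "\<dots> = Some (out (query_trace orc nxt Q))"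
      using Suc.IH[of "Suc k"] Suc.prems False by (simp del: query_trace.simps)
    finally show ?thesis .
  qed
qed

declare query_trace.simps(2) [simp del]

lemma run_learner:
  assumes "num_queries m K T \<le> n"
  shows "run (learner m K T) orc n [] =
    Some (interp_cdf (queried_pts (query_trace orc (next_query m K T) (num_queries m K T)))
      (sampled_values (query_trace orc (next_query m K T) (num_queries m K T))))"
  using run_query_trace[where A = "learner m K T" and Q = "num_queries m K T" and k = 0,
      of "next_query m K T" "\<lambda>h. interp_cdf (queried_pts h) (sampled_values h)"] assms
  by (simp add: learner_def)

lemma sampled_values_eq:
  assumes "\<And>e. e \<in> set h \<Longrightarrow> fst (snd e) = F (fst e)" and "x \<in> fst ` set h"
  shows "sampled_values h x = F x"
proof -
  have "x \<in> fst ` set (map (\<lambda>e. (fst e, fst (snd e))) h)" using assms(2) by force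
  then obtain a where a: "map_of (map (\<lambda>e. (fst e, fst (snd e))) h) x = Some a"
    by (metis domD dom_map_of_conv_image_fst)
  then have "(x, a) \<in> set (map (\<lambda>e. (fst e, fst (snd e))) h)" by (rule map_of_SomeD)
  then obtain e where "e \<in> set h" "x = fst e" "a = fst (snd e)" by auto
  then show ?thesis using a assms(1) unfolding sampled_values_def by auto
qed

lemma grid_bracket:
  fixes u :: real
  assumes "0 \<le> u" "u < 1" "1 \<le> m"
  obtains i where "i < m" "real i / real m \<le> u" "u < (real i + 1) / real m"
proof
  define i where "i = nat \<lfloor>u * real m\<rfloor>"
  have m: "0 < real m" using assms by simp
  have fl: "real i \<le> u * real m" "u * real m < real i + 1"
    using assms m unfolding i_def by (auto simp: of_nat_nat)
  have "u * real m < 1 * real m" using assms m by (intro mult_strict_right_mono) auto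
  then show "i < m" using fl by simp
  show "real i / real m \<le> u" "u < (real i + 1) / real m" using fl m by (auto simp: field_simps)
qed

lemma switch_outside_gap:
  fixes Q :: "real \<Rightarrow> bool"
  assumes pq: "0 \<le> p" "p < q" "q \<le> 1"
    and gap: "\<And>x. x \<in> X \<Longrightarrow> x \<le> p \<or> q \<le> x"
    and bracket: "lo \<in> X" "hi \<in> X" "0 \<le> lo" "lo \<le> hi" "hi \<le> 1" "hi - lo < q - p"
    and lo: "lo = 0 \<or> \<not> Q lo" and hi: "hi = 1 \<or> Q hi"
    and mono: "\<And>x y. 0 \<le> x \<Longrightarrow> x \<le> y \<Longrightarrow> y \<le> 1 \<Longrightarrow> Q x \<Longrightarrow> Q y"
  shows "Q p \<or> \<not> Q q"
proof -
  have "lo \<le> p \<or> q \<le> lo" "hi \<le> p \<or> q \<le> hi" using gap bracket by auto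
  then consider "q \<le> lo" | "hi \<le> p" using bracket by linarith
  then show ?thesis
  proof cases
    case 1
    then show ?thesis using lo pq bracket mono[of q lo] by auto
  next
    case 2
    then show ?thesis using hi pq bracket mono[of hi p] by auto
  qed
qed

locale learner_run =
  fixes F f :: "real \<Rightarrow> real" and m K :: nat and T :: "(real \<times> real \<Rightarrow> bool) list"
  assumes m_pos: "1 \<le> m"
begin

abbreviation "orc \<equiv> (\<lambda>x. (F x, f x))"
abbreviation "H \<equiv> query_trace orc (next_query m K T) (num_queries m K T)"

lemma trace_answers:
  assumes "e \<in> set H"
  shows "snd e = orc (fst e)"
proof -
  obtain i where "i < num_queries m K T" "e = H ! i"
    using assms by (metis in_set_conv_nth length_query_trace)
  then show ?thesis using nth_query_trace by simp
qed

lemma grid_queried: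
  assumes "i \<le> m"
  shows "real i / real m \<in> fst ` set H"
proof -
  have i: "i < num_queries m K T" using assms unfolding num_queries_def by simp
  then have "H ! i \<in> set H" by simp
  moreover have "fst (H ! i) = real i / real m"
    using nth_query_trace[OF i] assms unfolding next_query_def by (simp add: Let_def)
  ultimately show ?thesis by force
qed

lemma endpoints_queried: "0 \<in> fst ` set H" "1 \<in> fst ` set H"
proof -
  show "0 \<in> fst ` set H" using grid_queried[of 0] by simp
  have "real m / real m = 1" using m_pos by simp
  then show "1 \<in> fst ` set H" using grid_queried[of m] by simp
qed

sublocale queried: sample_points "queried_pts H"
  by unfold_locales (auto simp: queried_pts_def)

abbreviation "left \<equiv> left_pt (queried_pts H)"
abbreviation "right \<equiv> right_pt (queried_pts H)"

lemma sampled_values_queried: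
  assumes "x \<in> queried_pts H"
  shows "sampled_values H x = F x"
proof (rule sampled_values_eq)
  show "x \<in> fst ` set H" using assms endpoints_queried unfolding queried_pts_def by auto
qed (simp add: trace_answers)

lemma bisection_query:
  assumes j: "j < length T" and i: "i < K"
  defines "st \<equiv> bisect_state (T ! j) (take i (drop (Suc m + j * K) H))"
  shows "H ! (Suc m + j * K + i) = ((fst st + snd st) / 2, orc ((fst st + snd st) / 2))"
    and "Suc m + j * K + i < num_queries m K T"
    and "bisect_state (T ! j) (take (Suc i) (drop (Suc m + j * K) H))
      = bisect_step (T ! j) st (H ! (Suc m + j * K + i))"
proof -
  define s where "s = Suc m + j * K"
  have "(j + 1) * K \<le> length T * K" using j by (intro mult_le_mono1) simp
  then show idx: "Suc m + j * K + i < num_queries m K T"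
    unfolding num_queries_def using i by (simp add: algebra_simps)
  have prefix: "query_trace orc (next_query m K T) (s + i) = take (s + i) H"
    using take_query_trace[of "s + i" "num_queries m K T"] idx unfolding s_def by simp
  have dv: "(s + i - Suc m) div K = j" "(s + i - Suc m) mod K = i"
    unfolding s_def using i by auto
  have len: "length (take (s + i) H) = s + i" using idx unfolding s_def by simp
  have "\<not> s + i \<le> m" by (simp add: s_def)
  then have "next_query m K T (take (s + i) H) =
     (fst (bisect_state (T ! j) (take i (drop (Suc m + j * K) (take (s + i) H)))) +
      snd (bisect_state (T ! j) (take i (drop (Suc m + j * K) (take (s + i) H))))) / 2"
    unfolding next_query_def Let_def len dv by simp
  also have "take i (drop (Suc m + j * K) (take (s + i) H)) = take i (drop (Suc m + j * K) H)"
    unfolding s_def by (simp add: drop_take)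
  finally have "next_query m K T (query_trace orc (next_query m K T) (s + i)) = (fst st + snd st) / 2"
    unfolding prefix st_def .
  then show "H ! (Suc m + j * K + i) = ((fst st + snd st) / 2, orc ((fst st + snd st) / 2))"
    using nth_query_trace[OF idx] unfolding s_def by (simp only:)
  show "bisect_state (T ! j) (take (Suc i) (drop (Suc m + j * K) H))
      = bisect_step (T ! j) st (H ! (Suc m + j * K + i))"
    using idx unfolding st_def bisect_state_def by (simp add: take_Suc_conv_app_nth)
qed

lemma bisection_invariant:
  assumes j: "j < length T" and i: "i \<le> K"
  defines "st \<equiv> bisect_state (T ! j) (take i (drop (Suc m + j * K) H))"
  shows "0 \<le> fst st \<and> snd st \<le> 1 \<and> snd st - fst st = 1 / 2 ^ i \<and>
    (fst st = 0 \<or> fst st \<in> fst ` set H \<and> \<not> (T ! j) (orc (fst st))) \<and>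
    (snd st = 1 \<or> snd st \<in> fst ` set H \<and> (T ! j) (orc (snd st)))"
  using i unfolding st_def
proof (induction i)
  case 0
  then show ?case by (simp add: bisect_state_def)
next
  case (Suc i)
  define st where "st = bisect_state (T ! j) (take i (drop (Suc m + j * K) H))"
  define mid where "mid = (fst st + snd st) / 2"
  have IH: "0 \<le> fst st" "snd st \<le> 1" "snd st - fst st = 1 / 2 ^ i"
    "fst st = 0 \<or> fst st \<in> fst ` set H \<and> \<not> (T ! j) (orc (fst st))"
    "snd st = 1 \<or> snd st \<in> fst ` set H \<and> (T ! j) (orc (snd st))"
    using Suc unfolding st_def by auto
  note Q = bisection_query[OF j, of i, folded st_def mid_def]
  have "H ! (Suc m + j * K + i) \<in> set H" using Q(2) Suc.prems by simp
  then have mid_in: "mid \<in> fst ` set H" using Q(1) Suc.prems by force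
  have "(0::real) < 1 / 2 ^ i" by simp
  then have "fst st \<le> snd st" using IH(3) by linarith
  then have "0 \<le> mid" "mid \<le> 1" using IH(1,2) by (simp_all add: mid_def)
  moreover have "mid - fst st = 1 / 2 ^ Suc i" "snd st - mid = 1 / 2 ^ Suc i"
    using IH(3) unfolding mid_def by (simp_all add: field_simps)
  ultimately show ?case
  proof (cases "(T ! j) (orc mid)")
    case True
    then have "bisect_state (T ! j) (take (Suc i) (drop (Suc m + j * K) H)) = (fst st, mid)"
      using Q(1,3) Suc.prems unfolding bisect_step_def mid_def by simp
    then show ?thesis using IH mid_in True \<open>snd st - mid = 1 / 2 ^ Suc i\<close> \<open>mid - fst st = _\<close> \<open>mid \<le> 1\<close> by simp
  next
    case False
    then have "bisect_state (T ! j) (take (Suc i) (drop (Suc m + j * K) H)) = (mid, snd st)"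
      using Q(1,3) Suc.prems unfolding bisect_step_def mid_def by simp
    then show ?thesis using IH mid_in False \<open>snd st - mid = 1 / 2 ^ Suc i\<close> \<open>0 \<le> mid\<close> by simp
  qed
qed

lemma bisection_bracket:
  assumes j: "j < length T"
  obtains lo hi where "lo \<in> queried_pts H" "hi \<in> queried_pts H" "0 \<le> lo" "lo \<le> hi" "hi \<le> 1"
    "hi - lo = 1 / 2 ^ K" "lo = 0 \<or> \<not> (T ! j) (orc lo)" "hi = 1 \<or> (T ! j) (orc hi)"
proof -
  define st where "st = bisect_state (T ! j) (take K (drop (Suc m + j * K) H))"
  have I: "0 \<le> fst st" "snd st \<le> 1" "snd st - fst st = 1 / 2 ^ K"
    "fst st = 0 \<or> fst st \<in> fst ` set H \<and> \<not> (T ! j) (orc (fst st))"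
    "snd st = 1 \<or> snd st \<in> fst ` set H \<and> (T ! j) (orc (snd st))"
    using bisection_invariant[OF j order_refl] unfolding st_def by auto
  moreover have "(0::real) < 1 / 2 ^ K" by simp
  ultimately have "fst st \<le> snd st" "fst st \<le> 1" "0 \<le> snd st" by linarith+
  moreover have "fst st \<in> queried_pts H" "snd st \<in> queried_pts H"
    using I(4,5) \<open>fst st \<le> 1\<close> \<open>0 \<le> snd st\<close> I(1,2) unfolding queried_pts_def by auto
  ultimately show ?thesis using I(1-3) I(4,5) by (intro that[of "fst st" "snd st"]) blast+
qed

lemma test_constant_on_long_gap:
  assumes P: "P \<in> set T"
    and P_mono: "\<And>x y. 0 \<le> x \<Longrightarrow> x \<le> y \<Longrightarrow> y \<le> 1 \<Longrightarrow> P (orc x) \<Longrightarrow> P (orc y)"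
    and v: "0 \<le> v" "v < 1" and long: "1 / 2 ^ K < right v - left v"
  shows "P (orc (left v)) \<or> \<not> P (orc (right v))"
proof -
  obtain j where j: "j < length T" "P = T ! j" using P by (metis in_set_conv_nth)
  obtain lo hi where b: "lo \<in> queried_pts H" "hi \<in> queried_pts H" "0 \<le> lo" "lo \<le> hi" "hi \<le> 1"
    "hi - lo = 1 / 2 ^ K" "lo = 0 \<or> \<not> P (orc lo)" "hi = 1 \<or> P (orc hi)"
    using bisection_bracket[OF j(1)] unfolding j(2) by blast
  have seg: "0 \<le> left v" "left v < right v" "right v \<le> 1"
    using queried.left_pt[OF v(1)] queried.right_pt[OF v(2)] queried.X_unit by auto
  have "hi - lo < right v - left v" using b(6) long by simp
  from switch_outside_gap[where Q = "\<lambda>x. P (orc x)", OF seg queried.segment_gap[OF v]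
      b(1-5) this b(7,8) P_mono]
  show ?thesis .
qed

lemma segment_length_le_grid:
  assumes v: "0 \<le> v" "v < 1"
  shows "right v - left v \<le> 1 / real m"
proof -
  obtain k where k: "k < m" "real k / real m \<le> v" "v < (real k + 1) / real m"
    using grid_bracket[OF v m_pos] .
  have m0: "0 < real m" using m_pos by simp
  have "real k / real m \<in> queried_pts H" "(real k + 1) / real m \<in> queried_pts H"
    using grid_queried[of k] grid_queried[of "Suc k"] k(1) m0
    unfolding queried_pts_def by (auto simp: field_simps)
  then have "real k / real m \<le> left v" "right v \<le> (real k + 1) / real m"
    using queried.left_pt(3)[OF v(1)] queried.right_pt(3)[OF v(2)] k(2,3) by blast+
  then have "right v - left v \<le> (real k + 1) / real m - real k / real m" by linarith
  also have "\<dots> = 1 / real m" by (simp add: diff_divide_distrib[symmetric])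
  finally show ?thesis .
qed

end

section \<open>Threshold tests\<close>

definition level_grid :: "nat \<Rightarrow> nat \<Rightarrow> real list" where
  "level_grid m L = concat (map (\<lambda>j. map (\<lambda>i. 2 ^ j * (1 + real i / real m)) [0..<Suc m]) [0..<Suc L])"

definition slope_grid :: "nat \<Rightarrow> nat \<Rightarrow> real list" where
  "slope_grid m L = concat (map (\<lambda>j. map (\<lambda>i. 2 ^ j * real i / real m) [0..<Suc m]) [0..<Suc L]) @
     concat (map (\<lambda>j. map (\<lambda>i. 2 ^ j * real m / real i) [1..<Suc m]) [0..<Suc L])"

lemma level_grid_memI: "j \<le> L \<Longrightarrow> i \<le> m \<Longrightarrow> 2 ^ j * (1 + real i / real m) \<in> set (level_grid m L)"
  unfolding level_grid_def by force

lemma slope_grid_memI: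
  "j \<le> L \<Longrightarrow> i \<le> m \<Longrightarrow> 2 ^ j * real i / real m \<in> set (slope_grid m L)"
  "j \<le> L \<Longrightarrow> 1 \<le> i \<Longrightarrow> i \<le> m \<Longrightarrow> 2 ^ j * real m / real i \<in> set (slope_grid m L)"
  unfolding slope_grid_def by force+

lemma length_concat_map_map: "length (concat (map (\<lambda>j. map (h j) xs) ys)) = length ys * length xs"
  by (induction ys) auto

lemma dyadic_bracket:
  fixes x :: real
  assumes "1 \<le> x" "x < 2 ^ Suc L"
  shows "\<exists>j\<le>L. 2 ^ j \<le> x \<and> x < 2 ^ Suc j"
  using assms
proof (induction L)
  case (Suc L)
  then show ?case by (cases "x < 2 ^ Suc L") (auto intro: le_SucI)
qed auto

lemma level_grid_close:
  fixes a b :: real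
  assumes m: "1 \<le> m" and a: "1 \<le> a" "a < 2 ^ Suc L"
    and no_cross: "\<And>y. y \<in> set (level_grid m L) \<Longrightarrow> a < y \<Longrightarrow> b < y"
  obtains j where "j \<le> L" "2 ^ j \<le> a" "b - a \<le> 2 ^ j / real m"
proof -
  obtain j where j: "j \<le> L" "2 ^ j \<le> a" "a < 2 ^ Suc j" using dyadic_bracket[OF a] by blast
  have pj: "(0::real) < 2 ^ j" by simp
  obtain i where i: "i < m" "real i / real m \<le> a / 2 ^ j - 1" "a / 2 ^ j - 1 < (real i + 1) / real m"
    by (rule grid_bracket[of "a / 2 ^ j - 1" m]) (use j pj m in \<open>auto simp: field_simps\<close>)
  define y where "y = 2 ^ j * (1 + real (Suc i) / real m)"
  have "y \<in> set (level_grid m L)" unfolding y_def using level_grid_memI[OF j(1), of "Suc i"] i(1) by simp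
  moreover have "a < y" using i(3) pj unfolding y_def by (simp add: field_simps)
  ultimately have "b < y" by (rule no_cross)
  moreover have "2 ^ j * (1 + real i / real m) \<le> a" using i(2) pj by (simp add: field_simps)
  moreover have "y - 2 ^ j * (1 + real i / real m) = 2 ^ j / real m"
    unfolding y_def using m by (simp add: field_simps)
  ultimately show ?thesis using that j by fastforce
qed

lemma slope_grid_close_below:
  fixes a b :: real
  assumes m: "1 \<le> m" and j: "j \<le> L" and a: "0 \<le> a" "a < 2 ^ j"
    and no_cross: "\<And>t. t \<in> set (slope_grid m L) \<Longrightarrow> a < t \<Longrightarrow> b < t"
  shows "b - a \<le> 2 ^ j / real m"
proof -
  have pj: "(0::real) < 2 ^ j" by simp
  obtain i where i: "i < m" "real i / real m \<le> a / 2 ^ j" "a / 2 ^ j < (real i + 1) / real m"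
    by (rule grid_bracket[of "a / 2 ^ j" m]) (use a pj m in \<open>auto simp: field_simps\<close>)
  define t where "t = 2 ^ j * real (Suc i) / real m"
  have "t \<in> set (slope_grid m L)" unfolding t_def using slope_grid_memI(1)[OF j, of "Suc i"] i(1) by simp
  moreover have "a < t" using i(3) pj unfolding t_def by (simp add: field_simps)
  ultimately have "b < t" by (rule no_cross)
  moreover have "2 ^ j * real i / real m \<le> a" using i(2) pj by (simp add: field_simps)
  moreover have "t - 2 ^ j * real i / real m = 2 ^ j / real m"
    unfolding t_def using m by (simp add: field_simps)
  ultimately show ?thesis by linarith
qed

lemma slope_grid_close_above:
  fixes a b :: real
  assumes m: "1 \<le> m" and j: "j \<le> L" and ab: "2 ^ j \<le> a" "a \<le> b"
    and no_cross: "\<And>t. t \<in> set (slope_grid m L) \<Longrightarrow> a < t \<Longrightarrow> b < t"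
  shows "1 / a - 1 / b \<le> 1 / (2 ^ j * real m)"
proof -
  have pj: "(0::real) < 2 ^ j" and m0: "0 < real m" using m by simp_all
  have a0: "0 < a" and b0: "0 < b" using ab pj by linarith+
  define w where "w = 2 ^ j * real m / a"
  have inv_a: "1 / a = w / (2 ^ j * real m)" unfolding w_def using a0 m0 by simp
  have w_le: "w \<le> real m" unfolding w_def using ab a0 m0 by (simp add: divide_le_eq mult_right_mono)
  define k where "k = nat (\<lceil>w\<rceil> - 1)"
  have "0 < w" unfolding w_def using a0 m0 by simp
  then have "real k = of_int \<lceil>w\<rceil> - 1" unfolding k_def by (simp add: of_nat_nat)
  then have k: "real k < w" "w \<le> real k + 1" using ceiling_correct[of w] by linarith+
  have "real k / (2 ^ j * real m) \<le> 1 / b"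
  proof (cases "k = 0")
    case False
    define t where "t = 2 ^ j * real m / real k"
    have "t \<in> set (slope_grid m L)"
      unfolding t_def using slope_grid_memI(2)[OF j, of k] False k w_le by simp
    moreover have "a < t"
      using k(1) False a0 unfolding t_def w_def by (simp add: field_simps)
    ultimately have "b < t" by (rule no_cross)
    then have "1 / t < 1 / b" using b0 by (simp add: frac_less2)
    then show ?thesis using False unfolding t_def by simp
  qed (use b0 in simp)
  moreover have "w / (2 ^ j * real m) - real k / (2 ^ j * real m) \<le> 1 / (2 ^ j * real m)"
    using k pj m0 by (simp add: diff_divide_distrib[symmetric] divide_right_mono)
  ultimately show ?thesis unfolding inv_a by linarith
qed

definition tail_cutoff :: "nat \<Rightarrow> real" where
  "tail_cutoff L = 1 / 2 ^ Suc L"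

lemma tail_cutoff_pos: "0 < tail_cutoff L"
  unfolding tail_cutoff_def by simp

text \<open>On an oracle answer \<open>(F x, f x)\<close>, \<open>level_test y\<close> says \<open>inv_surv F x \<ge> y\<close>, and
  \<open>slope_test e t\<close> says \<open>F x \<ge> 1 - e\<close> or \<open>inv_surv_slope F f x \<ge> t\<close>.\<close>
definition level_test :: "real \<Rightarrow> real \<times> real \<Rightarrow> bool" where
  "level_test y ans \<longleftrightarrow> 1 - 1 / y \<le> fst ans"

definition slope_test :: "real \<Rightarrow> real \<Rightarrow> real \<times> real \<Rightarrow> bool" where
  "slope_test e t ans \<longleftrightarrow> 1 - e \<le> fst ans \<or> t * (1 - fst ans)^2 \<le> snd ans"

definition tests :: "nat \<Rightarrow> nat \<Rightarrow> (real \<times> real \<Rightarrow> bool) list" where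
  "tests m L = map level_test (level_grid m L) @ map (slope_test (tail_cutoff L)) (slope_grid m L)"

lemma length_tests: "length (tests m L) = Suc L * (3 * m + 2)"
  unfolding tests_def level_grid_def slope_grid_def length_append length_map length_concat_map_map
  by (simp add: algebra_simps)

lemma level_test_iff:
  "F x < 1 \<Longrightarrow> 0 < y \<Longrightarrow> level_test y (F x, f x) \<longleftrightarrow> y \<le> inv_surv F x"
  unfolding level_test_def inv_surv_def by (auto simp: field_simps)

lemma level_test_top:
  "level_test (2 ^ Suc L) ans \<longleftrightarrow> 1 - tail_cutoff L \<le> fst ans"
  unfolding level_test_def tail_cutoff_def by simp

lemma slope_test_iff:
  assumes "0 < e" "F x < 1 - e"
  shows "slope_test e t (F x, f x) \<longleftrightarrow> t \<le> inv_surv_slope F f x"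
proof -
  have "0 < (1 - F x)^2" using assms by simp
  then show ?thesis using assms unfolding slope_test_def inv_surv_slope_def
    by (simp add: pos_le_divide_eq)
qed

lemma tests_mono:
  assumes sr: "smooth_regular_01 F f" and P: "P \<in> set (tests m L)"
    and xy: "0 \<le> x" "x \<le> y" "y \<le> 1" and Px: "P (F x, f x)"
  shows "P (F y, f y)"
proof -
  have Fxy: "F x \<le> F y" using smooth_regular_01_cdf(1)[OF sr] xy by (simp add: monoD)
  note e = tail_cutoff_pos[of L]
  consider c where "P = level_test c" | t where "P = slope_test (tail_cutoff L) t"
    using P unfolding tests_def by auto
  then show ?thesis
  proof cases
    case 1
    then show ?thesis using Px Fxy unfolding level_test_def by simp
  next
    case (2 t)
    show ?thesis
    proof (cases "F y < 1 - tail_cutoff L")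
      case True
      then have "F x < 1 - tail_cutoff L" using Fxy by simp
      then have "t \<le> inv_surv_slope F f x" using Px slope_test_iff[where F = F and x = x, OF e] 2 by simp
      also have "\<dots> \<le> inv_surv_slope F f y"
        using inv_surv_slope_mono[OF sr xy] True e by simp
      finally show ?thesis using slope_test_iff[where F = F and x = y, OF e True] 2 by simp
    qed (use 2 in \<open>simp add: slope_test_def\<close>)
  qed
qed

lemma below_tail_of_tests:
  assumes m: "1 \<le> m" and Fp: "a < 1 - tail_cutoff L"
    and no_switch: "\<And>P. P \<in> set (tests m L) \<Longrightarrow> P (a, a') \<or> \<not> P (b, b')"
  shows "b < 1 - tail_cutoff L"
proof -
  have "2 ^ Suc L \<in> set (level_grid m L)"
    using level_grid_memI[of L L m m] m by (simp add: mult.commute)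
  then have "level_test (2 ^ Suc L) \<in> set (tests m L)" unfolding tests_def by simp
  moreover have "\<not> level_test (2 ^ Suc L) (a, a')" using Fp level_test_top[of L] by simp
  ultimately have "\<not> level_test (2 ^ Suc L) (b, b')" using no_switch by blast
  then show ?thesis using level_test_top[of L] by simp
qed

context regular_segment
begin

lemma tests_bracket:
  assumes m: "1 \<le> m" and Fp: "F p < 1 - tail_cutoff L"
    and no_switch: "\<And>P. P \<in> set (tests m L) \<Longrightarrow> P (F p, f p) \<or> \<not> P (F q, f q)"
  obtains j where "j \<le> L" "2 ^ j \<le> g p" "g q - g p \<le> 2 ^ j / real m"
    "s p < 2 ^ j \<Longrightarrow> s q - s p \<le> 2 ^ j / real m"
    "2 ^ j \<le> s p \<Longrightarrow> 1 / s p - 1 / s q \<le> 1 / (2 ^ j * real m)"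
proof -
  note cut = tail_cutoff_pos[of L]
  have Fq: "F q < 1 - tail_cutoff L"
    using below_tail_of_tests[where a' = "f p" and b = "F q" and b' = "f q", OF m Fp no_switch] .
  have "1 < 2 ^ Suc L * (1 - F p)"
    using Fp unfolding tail_cutoff_def by (simp add: field_simps)
  then have gp: "1 \<le> g p" "g p < 2 ^ Suc L"
    using inv_surv_ge_one[of p] segment F_less_one[of p] unfolding inv_surv_def
    by (auto simp: divide_less_eq mult.commute)
  have levels: "g q < y" if "y \<in> set (level_grid m L)" "g p < y" for y
  proof -
    have y: "0 < y" using that gp by linarith
    have "F p < 1" "F q < 1" using F_less_one segment by auto
    note iff = level_test_iff[where F = F and f = f, OF _ y]
    have "\<not> level_test y (F p, f p)" using that iff[OF \<open>F p < 1\<close>] by simp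
    then have "\<not> level_test y (F q, f q)"
      using no_switch[of "level_test y"] that(1) unfolding tests_def by auto
    then show ?thesis using iff[OF \<open>F q < 1\<close>] by simp
  qed
  have slopes: "s q < t" if "t \<in> set (slope_grid m L)" "s p < t" for t
    using no_switch[of "slope_test (tail_cutoff L) t"] that
      slope_test_iff[where F = F and x = p, OF cut Fp] slope_test_iff[where F = F and x = q, OF cut Fq]
    unfolding tests_def by auto
  have sp: "0 \<le> s p" "s p \<le> s q"
    using smooth_regular_01_pdf_nonneg[OF regular] slope_mono segment
    unfolding inv_surv_slope_def by auto
  obtain j where "j \<le> L" "2 ^ j \<le> g p" "g q - g p \<le> 2 ^ j / real m"
    using level_grid_close[OF m gp levels] by blast
  then show ?thesis
    using slope_grid_close_below[OF m _ sp(1) _ slopes] slope_grid_close_above[OF m _ _ sp(2) slopes]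
    by (intro that) auto
qed

lemma interp_le_of_tests:
  assumes v: "v \<in> {p..q}" and m: "1 \<le> m" and gap: "q - p \<le> 1 / real m"
    and eps: "1 / (real m)^2 \<le> \<epsilon>" and Fp: "F p < 1 - tail_cutoff L"
    and no_switch: "\<And>P. P \<in> set (tests m L) \<Longrightarrow> P (F p, f p) \<or> \<not> P (F q, f q)"
  shows "inv_surv_interp (F p) (F q) p q v \<le> F (v + \<epsilon>) + \<epsilon>"
proof -
  obtain j where j: "2 ^ j \<le> g p" "g q - g p \<le> 2 ^ j / real m"
    "s p < 2 ^ j \<Longrightarrow> s q - s p \<le> 2 ^ j / real m"
    "2 ^ j \<le> s p \<Longrightarrow> 1 / s p - 1 / s q \<le> 1 / (2 ^ j * real m)"
    using tests_bracket[OF m Fp no_switch] by blast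
  have m0: "0 < real m" and pj: "(0::real) < 2 ^ j" using m by simp_all
  have eps0: "0 \<le> \<epsilon>" using eps m0 by (meson order_trans zero_le_divide_1_iff zero_le_power2)
  show ?thesis
  proof (cases "s p < 2 ^ j")
    case True
    \<comment> \<open>vertical error at most \<open>(q - p) (s q - s p) / 4\<^sup>j \<le> 1 / m\<^sup>2\<close>\<close>
    have "(q - p) * (s q - s p) \<le> (1 / real m) * (2 ^ j / real m)"
      using gap segment j(3)[OF True] slope_mono[of p q] by (intro mult_mono) auto
    then have "inv_surv_interp (F p) (F q) p q v \<le> F v + (1 / real m * (2 ^ j / real m)) / (2 ^ j)^2"
      using interp_le_add[OF v pj j(1)] by blast
    also have "(1 / real m * (2 ^ j / real m)) / (2 ^ j)^2 = 1 / ((real m)^2 * 2 ^ j)"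
      by (simp add: field_simps power2_eq_square)
    also have "\<dots> \<le> 1 / (real m)^2" using m0 by (simp add: frac_le)
    also have "F v \<le> F (v + \<epsilon>)"
      using eps0 smooth_regular_01_cdf(1)[OF regular] by (simp add: monoD)
    finally show ?thesis using eps by linarith
  next
    case False
    \<comment> \<open>horizontal error at most \<open>(g q - g p) (1 / s p - 1 / s q) \<le> 1 / m\<^sup>2\<close>\<close>
    have "0 < s p" using False pj by linarith
    then have "0 \<le> 1 / s p - 1 / s q" using slope_mono[of p q] segment by (simp add: frac_le)
    moreover have "g p \<le> g q" using inv_surv_mono[of p q] segment by simp
    ultimately have "(g q - g p) * (1 / s p - 1 / s q) \<le> (2 ^ j / real m) * (1 / (2 ^ j * real m))"
      using j(2) j(4) False by (intro mult_mono) auto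
    also have "\<dots> = 1 / (real m)^2" by (simp add: field_simps power2_eq_square)
    finally have "inv_surv_interp (F p) (F q) p q v \<le> F (v + \<epsilon>)"
      using interp_le_shift[OF v eps0 \<open>0 < s p\<close>] eps by simp
    then show ?thesis using eps0 by linarith
  qed
qed

end

section \<open>Accuracy and query count\<close>

context learner_run
begin

lemma sampled_cdf_queried:
  assumes "smooth_regular_01 F f"
  shows "sampled_cdf (queried_pts H) (sampled_values H) F"
  unfolding sampled_cdf_def sampled_cdf_axioms_def
  using queried.sample_points_axioms sampled_values_queried smooth_regular_01_cdf[OF assms] by blast

lemma interp_cdf_close_on_long_segment:
  assumes sr: "smooth_regular_01 F f" and T: "T = tests m K"
    and eps: "1 / 2 ^ K \<le> \<epsilon>" "1 / (real m)^2 \<le> \<epsilon>" and v: "0 \<le> v" "v < 1"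
    and long: "\<epsilon> < right v - left v" and below_top: "F (left v) < 1 - \<epsilon>"
  shows "F v \<le> interp_cdf (queried_pts H) (sampled_values H) v \<and>
    interp_cdf (queried_pts H) (sampled_values H) v \<le> F (v + \<epsilon>) + \<epsilon>"
proof -
  interpret S: sampled_cdf "queried_pts H" "sampled_values H" F by (rule sampled_cdf_queried[OF sr])
  define p where "p = left v"
  define q where "q = right v"
  have seg: "0 \<le> p" "p \<le> v" "v < q" "q \<le> 1"
    using queried.left_pt[OF v(1)] queried.right_pt[OF v(2)] queried.X_unit unfolding p_def q_def by auto
  have "tail_cutoff K \<le> 1 / 2 ^ K" unfolding tail_cutoff_def by (intro divide_left_mono) auto
  then have Fp: "F p < 1 - tail_cutoff K" using eps(1) below_top unfolding p_def by linarith
  have no_switch: "P (F p, f p) \<or> \<not> P (F q, f q)" if P: "P \<in> set (tests m K)" for P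
    using test_constant_on_long_gap[where P = P, OF _ tests_mono[OF sr P] v] P long eps(1)
    unfolding T p_def q_def by simp
  have "F q < 1 - tail_cutoff K"
    using below_tail_of_tests[where a' = "f p" and b = "F q" and b' = "f q", OF m_pos Fp no_switch] .
  then interpret R: regular_segment F f p q
    by unfold_locales (use sr seg tail_cutoff_pos[of K] in auto)
  have "q - p \<le> 1 / real m" using segment_length_le_grid[OF v] unfolding p_def q_def .
  then show ?thesis
    using R.le_interp R.interp_le_of_tests[OF _ m_pos _ eps(2) Fp no_switch] seg S.interp_cdf_eq[OF v]
    unfolding p_def q_def by auto
qed

lemma interp_cdf_close:
  assumes sr: "smooth_regular_01 F f" and T: "T = tests m K"
    and eps: "1 / 2 ^ K \<le> \<epsilon>" "1 / (real m)^2 \<le> \<epsilon>" and v: "0 \<le> v" "v < 1"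
  shows "F (v - \<epsilon>) - \<epsilon> \<le> interp_cdf (queried_pts H) (sampled_values H) v \<and>
    interp_cdf (queried_pts H) (sampled_values H) v \<le> F (v + \<epsilon>) + \<epsilon>"
proof -
  interpret S: sampled_cdf "queried_pts H" "sampled_values H" F by (rule sampled_cdf_queried[OF sr])
  define G where "G = interp_cdf (queried_pts H) (sampled_values H) v"
  have G: "F (left v) \<le> G" "G \<le> F (right v)"
    using S.interp_cdf_between[OF v] unfolding G_def by auto
  have seg: "left v \<le> v" "v < right v"
    using queried.left_pt[OF v(1)] queried.right_pt[OF v(2)] by auto
  have eps0: "0 < \<epsilon>"
    using eps(1) by (meson less_le_trans zero_less_divide_1_iff zero_less_numeral zero_less_power)
  note mF = S.mono_F[THEN monoD]
  consider "right v - left v \<le> \<epsilon>" | "1 - \<epsilon> \<le> F (left v)"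
    | "\<epsilon> < right v - left v" "F (left v) < 1 - \<epsilon>" by linarith
  then have "F (v - \<epsilon>) - \<epsilon> \<le> G \<and> G \<le> F (v + \<epsilon>) + \<epsilon>"
  proof cases
    case 1
    then have "F (v - \<epsilon>) \<le> F (left v)" "F (right v) \<le> F (v + \<epsilon>)" using seg by (simp_all add: mF)
    then show ?thesis using G eps0 by linarith
  next
    case 2
    have "F (left v) \<le> F (v + \<epsilon>)" using seg eps0 by (simp add: mF)
    then show ?thesis using 2 G S.F_nonneg[of "v - \<epsilon>"] S.F_le_one[of "v - \<epsilon>"] S.F_le_one[of "right v"]
      by linarith
  next
    case 3
    have "F (v - \<epsilon>) \<le> F v" using eps0 by (simp add: mF)
    then show ?thesis
      using interp_cdf_close_on_long_segment[OF sr T eps v 3] eps0 unfolding G_def by linarith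
  qed
  then show ?thesis unfolding G_def .
qed

end

lemma grid_size_bounds:
  fixes \<epsilon> :: real
  assumes e: "0 < \<epsilon>" "\<epsilon> < 1"
  defines "m \<equiv> nat \<lceil>1 / sqrt \<epsilon>\<rceil>"
  shows "1 \<le> m" "1 / (real m)^2 \<le> \<epsilon>" "real m \<le> 2 * \<epsilon> powr (-1/2)" "1 \<le> \<epsilon> powr (-1/2)"
proof -
  have r: "\<epsilon> powr (-1/2) = 1 / sqrt \<epsilon>"
    using e powr_minus_divide[of \<epsilon> "1/2"] by (simp add: powr_half_sqrt)
  have r1: "1 \<le> 1 / sqrt \<epsilon>" using e by simp
  then show "1 \<le> \<epsilon> powr (-1/2)" unfolding r .
  have m: "real m = of_int \<lceil>1 / sqrt \<epsilon>\<rceil>" unfolding m_def using r1 by simp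
  then have m_ge: "1 / sqrt \<epsilon> \<le> real m" by simp
  then show "1 \<le> m" using r1 by linarith
  show "real m \<le> 2 * \<epsilon> powr (-1/2)" using m r1 unfolding r by linarith
  have "1 / \<epsilon> \<le> (real m)^2"
    using power_mono[OF m_ge, of 2] r1 e by (simp add: power_divide)
  moreover have "0 < (real m)^2" using m_ge r1 by simp
  ultimately show "1 / (real m)^2 \<le> \<epsilon>" using e by (simp add: field_simps)
qed

lemma depth_bounds:
  fixes \<epsilon> :: real
  assumes e: "0 < \<epsilon>" "\<epsilon> < 1/2"
  defines "L \<equiv> nat \<lceil>log 2 (1/\<epsilon>)\<rceil>"
  shows "1 / 2 ^ L \<le> \<epsilon>" "real L \<le> 4 * ln (1/\<epsilon>)" "1/2 \<le> ln (1/\<epsilon>)"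
proof -
  have ie: "2 < 1/\<epsilon>" using e by (simp add: field_simps)
  have lg: "1 < log 2 (1/\<epsilon>)" using ie e by (subst less_log_iff) auto
  have L: "real L = of_int \<lceil>log 2 (1/\<epsilon>)\<rceil>" unfolding L_def using lg by simp
  have "log 2 (1/\<epsilon>) \<le> real L" using L by simp
  then have "1/\<epsilon> \<le> 2 powr real L" using e by (simp add: log_le_iff)
  then show "1 / 2 ^ L \<le> \<epsilon>" using e by (simp add: powr_realpow field_simps)
  have l: "ln 2 \<le> ln (1/\<epsilon>)" using ie e by (subst ln_le_cancel_iff) auto
  then show "1/2 \<le> ln (1/\<epsilon>)" using ln2_ge_two_thirds by linarith
  have "log 2 (1/\<epsilon>) \<le> 2 * ln (1/\<epsilon>)"
    using ln2_ge_two_thirds l unfolding log_def by (simp add: field_simps)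
  then show "real L \<le> 4 * ln (1/\<epsilon>)" using L \<open>1/2 \<le> ln (1/\<epsilon>)\<close> by linarith
qed

lemma query_budget:
  fixes r l :: real
  assumes r: "1 \<le> r" and l: "1/2 \<le> l" and m: "real m \<le> 2 * r" and L: "real L \<le> 4 * l"
  shows "Suc m + Suc L * (3 * m + 2) * L \<le> nat \<lceil>300 * r * l^2\<rceil>"
proof -
  have "real (Suc m + Suc L * (3 * m + 2) * L) = real (Suc m) + real (Suc L) * real (3 * m + 2) * real L"
    by (simp only: of_nat_add of_nat_mult)
  also have "\<dots> \<le> 3 * r + (6 * l) * (8 * r) * (4 * l)"
    using r l m L by (intro add_mono mult_mono) auto
  also have "\<dots> \<le> 300 * r * l^2"
  proof -
    have "1/4 \<le> l^2" using power_mono[OF l, of 2] by (simp add: power2_eq_square)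
    then have "3 * r \<le> 12 * (r * l^2)" using r mult_left_mono[of "1/4" "l^2" r] by simp
    moreover have "(6 * l) * (8 * r) * (4 * l) = 192 * (r * l^2)" "300 * r * l^2 = 300 * (r * l^2)"
      by (simp_all add: power2_eq_square)
    moreover have "0 \<le> r * l^2" using r by simp
    ultimately show ?thesis by linarith
  qed
  also have "\<dots> \<le> real (nat \<lceil>300 * r * l^2\<rceil>)" by (rule real_nat_ceiling_ge)
  finally show ?thesis by (simp only: of_nat_le_iff)
qed

definition learner_for :: "real \<Rightarrow> history \<Rightarrow> action" where
  "learner_for \<epsilon> = (let m = nat \<lceil>1 / sqrt \<epsilon>\<rceil>; L = nat \<lceil>log 2 (1/\<epsilon>)\<rceil> in learner m L (tests m L))"

lemma learner_for_correct:
  fixes \<epsilon> :: real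
  assumes e: "0 < \<epsilon>" "\<epsilon> < 1/2" and sr: "smooth_regular_01 F f"
  shows "\<exists>G. run (learner_for \<epsilon>) (\<lambda>x. (F x, f x)) (nat \<lceil>300 * \<epsilon> powr (-1/2) * (ln (1/\<epsilon>))^2\<rceil>) []
    = Some G \<and> is_cdf G \<and> levy F G \<le> \<epsilon>"
proof -
  define m where "m = nat \<lceil>1 / sqrt \<epsilon>\<rceil>"
  define L where "L = nat \<lceil>log 2 (1/\<epsilon>)\<rceil>"
  have "\<epsilon> < 1" using e by simp
  note M = grid_size_bounds[OF e(1) this, folded m_def] and D = depth_bounds[OF e, folded L_def]
  have budget: "num_queries m L (tests m L) \<le> nat \<lceil>300 * \<epsilon> powr (-1/2) * (ln (1/\<epsilon>))^2\<rceil>"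
    using query_budget[OF M(4) D(3) M(3) D(2)] unfolding num_queries_def length_tests
    by (simp add: mult.assoc)
  interpret learner_run F f m L "tests m L" using M(1) by unfold_locales
  interpret S: sampled_cdf "queried_pts H" "sampled_values H" F by (rule sampled_cdf_queried[OF sr])
  have "levy F (interp_cdf (queried_pts H) (sampled_values H)) \<le> \<epsilon>"
    using interp_cdf_close[OF sr refl D(1) M(2)] e(1) by (intro S.levy_interp_cdf_le) auto
  then show ?thesis
    using run_learner[OF budget] S.is_cdf_interp_cdf unfolding learner_for_def Let_def m_def L_def by simp
qed

theorem theorem7:
  shows "\<exists>(C::real) (c::real) (k::nat). \<forall>\<epsilon>::real. 0 < \<epsilon> \<and> \<epsilon> < 1/2 \<longrightarrow>
    (\<exists>A :: history \<Rightarrow> action. \<forall>F f. smooth_regular_01 F f \<longrightarrow>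
       (\<exists>G. run A (\<lambda>x. (F x, f x)) (nat \<lceil>C * \<epsilon> powr (-1/2) * (ln (1/\<epsilon>)) ^ k\<rceil>) [] = Some G
            \<and> is_cdf G \<and> levy F G \<le> c * \<epsilon>))"
  by (rule exI[of _ "300::real"], rule exI[of _ "1::real"], rule exI[of _ "2::nat"])
    (use learner_for_correct in fastforce)

end
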